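(* There is an absolute constant $C>0$ such that for all integers $d,h\ge 1$ the following holds: the class of graphs admitting a signed tree model of width at most $d$ whose tree has depth at most $h$ admits an adjacency labeling scheme in which every $n$-vertex graph ($n\ge 2$) receives labels of at most $C\,d\,h\log n$ bits; i.e., every $n$-vertex graph with a signed tree model of width $d$ and depth $h$ admits $O(dh\log n)$-bit adjacency labels decodable by a common decoder.
   Context: Tree notation: for a rooted tree $T$, $u\prec_T u'$ means $u$ is a strict ancestor of $u'$, $u\preceq_T u'$ means $u=u'$ or $u\prec_T u'$; for unordered pairs, $uv\preceq_T u'v'$ means ($u\preceq_T u'$ and $v\preceq_T v'$) or ($v\preceq_T u'$ and $u\preceq_T v'$), and $uv\prec_T u'v'$ means $uv\preceq_T u'v'$ and $\{u,v\}\ne\{u',v'\}$. A full rooted binary tree has every non-leaf node with exactly two children; its depth is the maximum number of nodes on a root-to-leaf path. A transversal pair of $T$ is a pair of distinct nodes neither an ancestor of the other; two transversal pairs cross if their endpoints can be named $\{a,b\},\{a',b'\}$ with $a\prec_T a'$ and $b'\prec_T b$. A signed tree model is $(T,A(T),B(T))$ with $T$ a full rooted binary tree and $A(T),B(T)$ disjoint sets of transversal pairs, no two pairs of $A(T)\cup B(T)$ crossing. It defines the graph on the leaf set $L(T)$ where distinct leaves $u,v$ are adjacent iff some $u'v'\in B(T)$ has $u'v'\preceq_T uv$ and no $u''v''\in A(T)$ has $u'v'\prec_T u''v''\preceq_T uv$. Its width is the degeneracy of the graph $(V(T),A(T)\cup B(T))$. An adjacency labeling scheme with $f(n)$-bit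 labels for a class $\mathcal C$: a decoder $D$ on pairs of binary strings such that every $n$-vertex $G\in\mathcal C$ has a labeling $\ell$ of its vertices with strings of length $\le f(n)$ satisfying $D(\ell(u),\ell(v))=1$ iff $uv\in E(G)$ for distinct $u,v$. *)

theory Defs
  imports Complex_Main
begin

text \<open>A node of a rooted binary tree is addressed by the path from the root
  (a list of booleans: False = left child, True = right child).\<close>

type_synonym node = "bool list"

definition anc_eq :: "node \<Rightarrow> node \<Rightarrow> bool" where
  "anc_eq u v \<longleftrightarrow> (\<exists>w. v = u @ w)"

definition anc :: "node \<Rightarrow> node \<Rightarrow> bool" where
  "anc u v \<longleftrightarrow> anc_eq u v \<and> u \<noteq> v"

definition full_binary_tree :: "node set \<Rightarrow> bool" where
  "full_binary_tree T \<longleftrightarrow> finite T \<and> [] \<in> T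
     \<and> (\<forall>v\<in>T. \<forall>u. anc_eq u v \<longrightarrow> u \<in> T)
     \<and> (\<forall>v\<in>T. (v @ [False] \<in> T) \<longleftrightarrow> (v @ [True] \<in> T))"

definition leaves :: "node set \<Rightarrow> node set" where
  "leaves T = {v \<in> T. v @ [False] \<notin> T \<and> v @ [True] \<notin> T}"

text \<open>Depth = maximum number of nodes on a root-to-leaf path (= length + 1).\<close>
definition depth_at_most :: "node set \<Rightarrow> nat \<Rightarrow> bool" where
  "depth_at_most T h \<longleftrightarrow> (\<forall>v\<in>T. length v + 1 \<le> h)"

definition transversal_pair :: "node set \<Rightarrow> node set \<Rightarrow> bool" where
  "transversal_pair T p \<longleftrightarrow> (\<exists>u v. p = {u, v} \<and> u \<in> T \<and> v \<in> T \<and> u \<noteq> v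
      \<and> \<not> anc_eq u v \<and> \<not> anc_eq v u)"

definition pair_le :: "node set \<Rightarrow> node set \<Rightarrow> bool" where
  "pair_le p q \<longleftrightarrow> (\<exists>u v u' v'. p = {u, v} \<and> q = {u', v'} \<and> anc_eq u u' \<and> anc_eq v v')"

definition pair_less :: "node set \<Rightarrow> node set \<Rightarrow> bool" where
  "pair_less p q \<longleftrightarrow> pair_le p q \<and> p \<noteq> q"

definition pairs_cross :: "node set \<Rightarrow> node set \<Rightarrow> bool" where
  "pairs_cross p q \<longleftrightarrow> (\<exists>a b a' b'. p = {a, b} \<and> q = {a', b'} \<and> anc a a' \<and> anc b' b)"

definition signed_tree_model :: "node set \<Rightarrow> node set set \<Rightarrow> node set set \<Rightarrow> bool" where
  "signed_tree_model T A B \<longleftrightarrow> full_binary_tree T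
     \<and> (\<forall>p\<in>A. transversal_pair T p) \<and> (\<forall>p\<in>B. transversal_pair T p)
     \<and> A \<inter> B = {}
     \<and> (\<forall>p\<in>A \<union> B. \<forall>q\<in>A \<union> B. \<not> pairs_cross p q)"

definition model_adj :: "node set set \<Rightarrow> node set set \<Rightarrow> node \<Rightarrow> node \<Rightarrow> bool" where
  "model_adj A B u v \<longleftrightarrow> (\<exists>p\<in>B. pair_le p {u, v}
      \<and> \<not> (\<exists>q\<in>A. pair_less p q \<and> pair_le q {u, v}))"

definition width_at_most :: "node set \<Rightarrow> node set set \<Rightarrow> node set set \<Rightarrow> nat \<Rightarrow> bool" where
  "width_at_most T A B d \<longleftrightarrow> (\<forall>S \<subseteq> T. S \<noteq> {} \<longrightarrow>
      (\<exists>v\<in>S. card {w \<in> S. {v, w} \<in> A \<union> B} \<le> d))"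

text \<open>Finite graphs: a finite vertex set V of naturals and an adjacency predicate E
  (only its values on distinct vertices of V matter).\<close>

definition has_signed_tree_model :: "nat \<Rightarrow> nat \<Rightarrow> nat set \<Rightarrow> (nat \<Rightarrow> nat \<Rightarrow> bool) \<Rightarrow> bool" where
  "has_signed_tree_model d h V E \<longleftrightarrow> (\<exists>T A B \<phi>. signed_tree_model T A B
      \<and> width_at_most T A B d \<and> depth_at_most T h
      \<and> bij_betw \<phi> V (leaves T)
      \<and> (\<forall>u\<in>V. \<forall>v\<in>V. u \<noteq> v \<longrightarrow> (E u v \<longleftrightarrow> model_adj A B (\<phi> u) (\<phi> v))))"

definition labeling_scheme ::
  "(nat set \<Rightarrow> (nat \<Rightarrow> nat \<Rightarrow> bool) \<Rightarrow> bool) \<Rightarrow> (nat \<Rightarrow> real) \<Rightarrow> bool" where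
  "labeling_scheme cls f \<longleftrightarrow> (\<exists>D :: bool list \<Rightarrow> bool list \<Rightarrow> bool.
      \<forall>V E. finite V \<longrightarrow> card V \<ge> 2 \<longrightarrow> cls V E \<longrightarrow>
        (\<exists>lab :: nat \<Rightarrow> bool list.
           (\<forall>v\<in>V. real (length (lab v)) \<le> f (card V))
         \<and> (\<forall>u\<in>V. \<forall>v\<in>V. u \<noteq> v \<longrightarrow> (D (lab u) (lab v) \<longleftrightarrow> E u v))))"

end

theory Submission
  imports Defs "HOL-Library.Sublist"
begin

text \<open>Orient the edges of the d-degenerate graph (V(T), A \<union> B) so that every node has at most d
  out-neighbours, and name every node by the indices of its leftmost and rightmost descendant
  leaves, which costs O(log n) bits. The label of a leaf u lists, for each of the at most h
  ancestors a of u, the name of a followed by the names and signs of the out-neighbours of a.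
  Every pair of A \<union> B below the pair uv has both ends among the ancestors of u or of v, so it is
  recorded in one of the two labels, and the ancestor relation between such nodes is read off
  the root-to-leaf order of the names in the labels. Hence the adjacency rule of the model can be
  evaluated on the labels alone.\<close>

definition self_delimiting :: "('a \<Rightarrow> bool list) \<Rightarrow> bool" where
  "self_delimiting f \<longleftrightarrow> (\<forall>x y r s. f x @ r = f y @ s \<longrightarrow> x = y \<and> r = s)"

lemma self_delimitingI:
  "(\<And>x y r s. f x @ r = f y @ s \<Longrightarrow> x = y \<and> r = s) \<Longrightarrow> self_delimiting f"
  unfolding self_delimiting_def by blast

lemma self_delimitingD:
  "self_delimiting f \<Longrightarrow> f x @ r = f y @ s \<Longrightarrow> x = y \<and> r = s"
  unfolding self_delimiting_def by blast

lemma self_delimiting_imp_inj: "self_delimiting f \<Longrightarrow> inj f"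
  by (rule injI) (use self_delimitingD[where r = "[]" and s = "[]"] in simp)

text \<open>Each binary digit is preceded by a continuation flag.\<close>
fun enc_nat :: "nat \<Rightarrow> bool list" where
  "enc_nat x = (if x = 0 then [False] else True # odd x # enc_nat (x div 2))"

declare enc_nat.simps[simp del]

definition enc_pair :: "('a \<Rightarrow> bool list) \<Rightarrow> ('b \<Rightarrow> bool list) \<Rightarrow> 'a \<times> 'b \<Rightarrow> bool list" where
  "enc_pair f g = (\<lambda>(x, y). f x @ g y)"

fun enc_list :: "('a \<Rightarrow> bool list) \<Rightarrow> 'a list \<Rightarrow> bool list" where
  "enc_list f [] = [False]"
| "enc_list f (x # xs) = True # f x @ enc_list f xs"

lemma self_delimiting_enc_nat: "self_delimiting enc_nat"
proof (rule self_delimitingI)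
  fix x y r s
  show "enc_nat x @ r = enc_nat y @ s \<Longrightarrow> x = y \<and> r = s"
  proof (induction x arbitrary: y rule: enc_nat.induct)
    case (1 x)
    show ?case
    proof (cases "x = 0 \<or> y = 0")
      case True
      with "1.prems" show ?thesis
        by (auto simp: enc_nat.simps[of x] enc_nat.simps[of y] split: if_splits)
    next
      case False
      with "1.prems" have "odd x = odd y" "enc_nat (x div 2) @ r = enc_nat (y div 2) @ s"
        by (simp_all add: enc_nat.simps[of x] enc_nat.simps[of y])
      with "1.IH" False have "x div 2 = y div 2" "odd x = odd y" "r = s" by auto
      then show ?thesis by (metis div_mult_mod_eq odd_iff_mod_2_eq_one even_iff_mod_2_eq_zero)
    qed
  qed
qed

lemma self_delimiting_bool: "self_delimiting (\<lambda>b. [b])"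
  by (rule self_delimitingI) simp

lemma self_delimiting_enc_pair:
  assumes "self_delimiting f" "self_delimiting g"
  shows "self_delimiting (enc_pair f g)"
proof (rule self_delimitingI)
  fix p q :: "'a \<times> 'b" and r s
  assume "enc_pair f g p @ r = enc_pair f g q @ s"
  then have "f (fst p) @ g (snd p) @ r = f (fst q) @ g (snd q) @ s"
    by (simp add: enc_pair_def split_beta)
  with self_delimitingD[OF assms(1)] self_delimitingD[OF assms(2)]
  show "p = q \<and> r = s" by (metis prod.expand)
qed

lemma self_delimiting_enc_list:
  assumes "self_delimiting f"
  shows "self_delimiting (enc_list f)"
proof (rule self_delimitingI)
  fix xs ys r s
  show "enc_list f xs @ r = enc_list f ys @ s \<Longrightarrow> xs = ys \<and> r = s"
  proof (induction xs arbitrary: ys)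
    case Nil
    then show ?case by (cases ys) auto
  next
    case (Cons x xs)
    then obtain y ys' where ys: "ys = y # ys'" by (cases ys) auto
    with Cons.prems have "f x @ enc_list f xs @ r = f y @ enc_list f ys' @ s" by simp
    with self_delimitingD[OF assms] Cons.IH ys show ?case by blast
  qed
qed

lemma length_enc_nat_le: "x < 2 ^ k \<Longrightarrow> length (enc_nat x) \<le> 2 * k + 1"
proof (induction k arbitrary: x)
  case 0
  then show ?case by (simp add: enc_nat.simps)
next
  case (Suc k)
  then have "length (enc_nat (x div 2)) \<le> 2 * k + 1" by simp
  then show ?case by (simp add: enc_nat.simps[of x])
qed

lemma length_enc_pair: "length (enc_pair f g (x, y)) = length (f x) + length (g y)"
  by (simp add: enc_pair_def)

lemma length_enc_list_le:
  assumes "\<forall>x\<in>set xs. length (f x) \<le> m"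
  shows "length (enc_list f xs) \<le> 1 + length xs * (m + 1)"
  using assms by (induction xs) auto

lemma degenerate_orientation:
  assumes "finite S"
    and "\<forall>S'\<subseteq>S. S' \<noteq> {} \<longrightarrow> (\<exists>v\<in>S'. card {w \<in> S'. {v, w} \<in> E} \<le> d)"
  shows "\<exists>out. \<forall>a\<in>S. out a \<subseteq> S \<and> card (out a) \<le> d \<and> (\<forall>b\<in>out a. {a, b} \<in> E)
           \<and> (\<forall>b\<in>S. {a, b} \<in> E \<longrightarrow> b \<in> out a \<or> a \<in> out b)"
  using assms
proof (induction S rule: finite_psubset_induct)
  case (psubset S)
  show ?case
  proof (cases "S = {}")
    case True
    then show ?thesis by auto
  next
    case False
    then obtain v where v: "v \<in> S" "card {w \<in> S. {v, w} \<in> E} \<le> d"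
      using psubset.prems by blast
    have "S - {v} \<subset> S" using v by auto
    moreover have "\<forall>S'\<subseteq>S - {v}. S' \<noteq> {} \<longrightarrow> (\<exists>v\<in>S'. card {w \<in> S'. {v, w} \<in> E} \<le> d)"
      using psubset.prems by (meson Diff_subset order_trans)
    ultimately obtain out where out: "\<forall>a\<in>S - {v}. out a \<subseteq> S - {v} \<and> card (out a) \<le> d
        \<and> (\<forall>b\<in>out a. {a, b} \<in> E) \<and> (\<forall>b\<in>S - {v}. {a, b} \<in> E \<longrightarrow> b \<in> out a \<or> a \<in> out b)"
      using psubset.IH by presburger
    \<comment> \<open>The removed vertex of small degree points to all its neighbours.\<close>
    let ?out = "out(v := {w \<in> S. {v, w} \<in> E})"
    have "?out a \<subseteq> S \<and> card (?out a) \<le> d \<and> (\<forall>b\<in>?out a. {a, b} \<in> E)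
           \<and> (\<forall>b\<in>S. {a, b} \<in> E \<longrightarrow> b \<in> ?out a \<or> a \<in> ?out b)" if a: "a \<in> S" for a
    proof (cases "a = v")
      case True
      with v show ?thesis by (auto simp: insert_commute)
    next
      case False
      with out a have "out a \<subseteq> S - {v}" "card (out a) \<le> d" "\<forall>b\<in>out a. {a, b} \<in> E"
        and cover: "\<forall>b\<in>S - {v}. {a, b} \<in> E \<longrightarrow> b \<in> out a \<or> a \<in> out b"
        by auto
      moreover have "b \<in> ?out a \<or> a \<in> ?out b" if "b \<in> S" "{a, b} \<in> E" for b
        using cover a False that by (cases "b = v") (auto simp: insert_commute)
      ultimately show ?thesis using False by auto
    qed
    then show ?thesis by blast
  qed
qed

lemma anc_eq_eq_prefix: "anc_eq = prefix"
  by (auto simp: fun_eq_iff anc_eq_def prefix_def)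

lemma full_binary_tree_prefix_closed:
  "full_binary_tree T \<Longrightarrow> v \<in> T \<Longrightarrow> prefix u v \<Longrightarrow> u \<in> T"
  unfolding full_binary_tree_def anc_eq_eq_prefix by blast

definition extreme_leaf :: "node set \<Rightarrow> bool \<Rightarrow> node \<Rightarrow> node" where
  "extreme_leaf T b w = w @ replicate (GREATEST k. w @ replicate k b \<in> T) b"

lemma extreme_leaf_in_leaves:
  assumes T: "full_binary_tree T" "depth_at_most T h" and w: "w \<in> T"
  shows "extreme_leaf T b w \<in> leaves T"
proof -
  let ?P = "\<lambda>k. w @ replicate k b \<in> T"
  have bound: "?P k \<Longrightarrow> k \<le> h" for k
    using T(2) unfolding depth_at_most_def by fastforce
  have "?P (Greatest ?P)"
    using GreatestI_nat[of ?P 0 h] w bound by auto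
  moreover have "\<not> ?P (Suc (Greatest ?P))"
    using Greatest_le_nat[of ?P "Suc (Greatest ?P)" h] bound by fastforce
  ultimately have "extreme_leaf T b w \<in> T" "extreme_leaf T b w @ [b] \<notin> T"
    unfolding extreme_leaf_def by (simp_all add: replicate_append_same)
  with T(1) show ?thesis
    unfolding leaves_def full_binary_tree_def by (cases b) auto
qed

text \<open>A node is determined by its leftmost and rightmost descendant leaves: they extend it
  by a run of False and a run of True, respectively.\<close>
lemma inj_extreme_leaves: "inj (\<lambda>w. (extreme_leaf T False w, extreme_leaf T True w))"
proof -
  have run: "\<exists>m. w = v @ replicate m b"
    if "v @ replicate k b = w @ replicate k' b" "length v \<le> length w" for v w :: node and b k k'
  proof -
    have "w = take (length w) (v @ replicate k b)" using that(1) by simp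
    with that(2) show ?thesis by (auto simp: take_replicate)
  qed
  have "v = w" if left: "extreme_leaf T False v = extreme_leaf T False w"
    and right: "extreme_leaf T True v = extreme_leaf T True w" and len: "length v \<le> length w" for v w
  proof -
    obtain m where m: "w = v @ replicate m False"
      using run[OF left[unfolded extreme_leaf_def] len] by blast
    obtain m' where "w = v @ replicate m' True"
      using run[OF right[unfolded extreme_leaf_def] len] by blast
    with m have "replicate m False = replicate m' True" by simp
    then have "m = 0" by (cases m; cases m') auto
    with m show ?thesis by simp
  qed
  then show ?thesis
    by (intro injI) (metis (no_types) nat_le_linear prod.inject)
qed

lemma nth_prefixes: "i \<le> length xs \<Longrightarrow> prefixes xs ! i = take i xs"
  by (induction xs arbitrary: i) (auto simp: nth_Cons split: nat.split)

definition earlier_in :: "'a list \<Rightarrow> 'a \<Rightarrow> 'a \<Rightarrow> bool" where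
  "earlier_in xs x y \<longleftrightarrow> (\<exists>i j. i \<le> j \<and> j < length xs \<and> xs ! i = x \<and> xs ! j = y)"

lemma earlier_in_map:
  assumes "inj_on f (set xs \<union> {x, y})"
  shows "earlier_in (map f xs) (f x) (f y) \<longleftrightarrow> earlier_in xs x y"
proof -
  have "f (xs ! i) = f z \<longleftrightarrow> xs ! i = z" if "i < length xs" "z \<in> {x, y}" for i z
    using inj_onD[OF assms] that by (metis UnCI nth_mem)
  then show ?thesis
    unfolding earlier_in_def by (auto 0 4)
qed

lemma earlier_in_prefixes: "earlier_in (prefixes u) x y \<longleftrightarrow> prefix x y \<and> prefix y u"
proof
  assume "earlier_in (prefixes u) x y"
  then obtain i j where "i \<le> j" "j \<le> length u" "x = take i u" "y = take j u"
    unfolding earlier_in_def by (auto simp: nth_prefixes)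
  then show "prefix x y \<and> prefix y u"
    by (simp add: take_is_prefix) (metis min_def take_is_prefix take_take)
next
  assume "prefix x y \<and> prefix y u"
  then have "length x \<le> length y" "length y \<le> length u"
    and "take (length x) u = x" "take (length y) u = y"
    by (auto simp: prefix_def prefix_length_le)
  then show "earlier_in (prefixes u) x y"
    unfolding earlier_in_def
    by (intro exI[of _ "length x"] exI[of _ "length y"]) (simp add: nth_prefixes)
qed

definition lift_pair :: "('a \<Rightarrow> 'b \<Rightarrow> bool) \<Rightarrow> 'a set \<Rightarrow> 'b set \<Rightarrow> bool" where
  "lift_pair R X Y \<longleftrightarrow> (\<exists>a b a' b'. X = {a, b} \<and> Y = {a', b'} \<and> R a a' \<and> R b b')"

text \<open>The rule of model_adj for an abstract ancestor relation R, with the pairs of B tagged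
  True and those of A tagged False.\<close>
definition sign_adj :: "('a \<Rightarrow> 'a \<Rightarrow> bool) \<Rightarrow> ('a set \<times> bool) set \<Rightarrow> 'a set \<Rightarrow> bool" where
  "sign_adj R Es t \<longleftrightarrow> (\<exists>X. (X, True) \<in> Es \<and> lift_pair R X t
     \<and> \<not> (\<exists>Y. (Y, False) \<in> Es \<and> lift_pair R X Y \<and> X \<noteq> Y \<and> lift_pair R Y t))"

definition signed_pairs :: "'a set set \<Rightarrow> 'a set set \<Rightarrow> ('a set \<times> bool) set" where
  "signed_pairs A B = (\<lambda>p. (p, p \<in> B)) ` (A \<union> B)"

definition rename_pairs :: "('a \<Rightarrow> 'b) \<Rightarrow> ('a set \<times> bool) set \<Rightarrow> ('b set \<times> bool) set" where
  "rename_pairs f Es = (\<lambda>(X, s). (f ` X, s)) ` Es"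

lemma ex_rename_pairs:
  "(\<exists>Z. (Z, s) \<in> rename_pairs f Es \<and> P Z) \<longleftrightarrow> (\<exists>X. (X, s) \<in> Es \<and> P (f ` X))"
  unfolding rename_pairs_def by (auto simp: image_iff) (metis case_prod_conv)

lemma rename_pairs_Un: "rename_pairs f Es \<union> rename_pairs f Es' = rename_pairs f (Es \<union> Es')"
  unfolding rename_pairs_def by blast

lemma model_adj_eq_sign_adj:
  assumes "A \<inter> B = {}"
  shows "model_adj A B u v \<longleftrightarrow> sign_adj prefix (signed_pairs A B) {u, v}"
proof -
  have signs: "(p, True) \<in> signed_pairs A B \<longleftrightarrow> p \<in> B" "(p, False) \<in> signed_pairs A B \<longleftrightarrow> p \<in> A"
    for p
    using assms unfolding signed_pairs_def by (auto simp: image_iff)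
  have "pair_le = lift_pair prefix"
    by (simp add: fun_eq_iff pair_le_def lift_pair_def anc_eq_eq_prefix)
  then show ?thesis
    unfolding model_adj_def sign_adj_def pair_less_def signs by (simp add: Bex_def conj_assoc)
qed

lemma lift_pair_image:
  assumes f: "inj_on f D" and X: "X \<subseteq> D" and Y: "Y \<subseteq> D"
    and R: "\<And>x y. x \<in> D \<Longrightarrow> y \<in> D \<Longrightarrow> R' (f x) (f y) \<longleftrightarrow> R x y"
  shows "lift_pair R' (f ` X) (f ` Y) \<longleftrightarrow> lift_pair R X Y"
proof
  assume "lift_pair R' (f ` X) (f ` Y)"
  then obtain a b a' b' where fX: "f ` X = {a, b}" and fY: "f ` Y = {a', b'}"
    and "R' a a'" "R' b b'"
    unfolding lift_pair_def by blast
  have "a \<in> f ` X" "b \<in> f ` X" "a' \<in> f ` Y" "b' \<in> f ` Y"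
    using fX fY by auto
  then obtain x y x' y' where xy: "x \<in> X" "y \<in> X" "a = f x" "b = f y"
    and xy': "x' \<in> Y" "y' \<in> Y" "a' = f x'" "b' = f y'"
    by blast
  have "f ` X = f ` {x, y}" "{x, y} \<subseteq> D"
    using fX xy X by auto
  then have "X = {x, y}"
    using inj_on_image_eq_iff[OF f X] by blast
  moreover have "f ` Y = f ` {x', y'}" "{x', y'} \<subseteq> D"
    using fY xy' Y by auto
  then have "Y = {x', y'}"
    using inj_on_image_eq_iff[OF f Y] by blast
  moreover have "R x x'" "R y y'"
    using R xy xy' X Y \<open>R' a a'\<close> \<open>R' b b'\<close> by (auto simp: subset_iff)
  ultimately show "lift_pair R X Y"
    unfolding lift_pair_def by blast
next
  assume "lift_pair R X Y"
  then obtain a b a' b' where "X = {a, b}" "Y = {a', b'}" "R a a'" "R b b'"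
    unfolding lift_pair_def by blast
  with R X Y show "lift_pair R' (f ` X) (f ` Y)"
    unfolding lift_pair_def by (intro exI[of _ "f a"] exI[of _ "f b"] exI[of _ "f a'"] exI[of _ "f b'"]) auto
qed

lemma sign_adj_rename_pairs:
  assumes f: "inj_on f D" and Es: "\<And>X s. (X, s) \<in> Es \<Longrightarrow> X \<subseteq> D" and t: "t \<subseteq> D"
    and R: "\<And>x y. x \<in> D \<Longrightarrow> y \<in> D \<Longrightarrow> R' (f x) (f y) \<longleftrightarrow> R x y"
  shows "sign_adj R' (rename_pairs f Es) (f ` t) \<longleftrightarrow> sign_adj R Es t"
proof -
  have lift: "lift_pair R' (f ` X) (f ` Y) \<longleftrightarrow> lift_pair R X Y" if "X \<subseteq> D" "Y \<subseteq> D" for X Y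
    using lift_pair_image[where R' = R' and R = R, OF f that R] .
  have eq: "f ` X = f ` Y \<longleftrightarrow> X = Y" if "X \<subseteq> D" "Y \<subseteq> D" for X Y
    using inj_on_image_eq_iff[OF f that] .
  have dominated: "(\<exists>Y. (Y, False) \<in> Es \<and> lift_pair R' (f ` X) (f ` Y) \<and> f ` X \<noteq> f ` Y
        \<and> lift_pair R' (f ` Y) (f ` t)) \<longleftrightarrow>
      (\<exists>Y. (Y, False) \<in> Es \<and> lift_pair R X Y \<and> X \<noteq> Y \<and> lift_pair R Y t)"
    if X: "X \<subseteq> D" for X
  proof -
    have "lift_pair R' (f ` X) (f ` Y) \<and> f ` X \<noteq> f ` Y \<and> lift_pair R' (f ` Y) (f ` t)
        \<longleftrightarrow> lift_pair R X Y \<and> X \<noteq> Y \<and> lift_pair R Y t" if "(Y, False) \<in> Es" for Y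
      using lift[OF X Es[OF that]] eq[OF X Es[OF that]] lift[OF Es[OF that] t] by simp
    then show ?thesis
      by (intro ex_cong1 conj_cong[OF refl])
  qed
  have body: "lift_pair R' (f ` X) (f ` t) \<and> \<not> (\<exists>Y. (Y, False) \<in> Es \<and> lift_pair R' (f ` X) (f ` Y)
        \<and> f ` X \<noteq> f ` Y \<and> lift_pair R' (f ` Y) (f ` t)) \<longleftrightarrow>
      lift_pair R X t \<and> \<not> (\<exists>Y. (Y, False) \<in> Es \<and> lift_pair R X Y \<and> X \<noteq> Y \<and> lift_pair R Y t)"
    if "X \<subseteq> D" for X
    using lift[OF that t] dominated[OF that] by simp
  show ?thesis
    unfolding sign_adj_def ex_rename_pairs by (intro ex_cong1 conj_cong[OF refl] body) (erule Es)
qed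

lemma sign_adj_restrict:
  assumes R': "\<And>x y. R' x y \<longleftrightarrow> R x y \<and> y \<in> N"
    and down: "\<And>x y. R x y \<Longrightarrow> y \<in> N \<Longrightarrow> x \<in> N"
    and "t \<subseteq> N" and "Es' \<subseteq> Es" and Es': "\<And>X s. (X, s) \<in> Es \<Longrightarrow> X \<subseteq> N \<Longrightarrow> (X, s) \<in> Es'"
  shows "sign_adj R' Es' t \<longleftrightarrow> sign_adj R Es t"
proof -
  have lift: "lift_pair R' X Y \<longleftrightarrow> lift_pair R X Y \<and> Y \<subseteq> N" for X Y
    unfolding lift_pair_def R' by blast
  have below: "X \<subseteq> N" if "lift_pair R X Y" "Y \<subseteq> N" for X Y
    using that down unfolding lift_pair_def by blast
  have dominated: "(\<exists>Y. (Y, False) \<in> Es' \<and> lift_pair R' X Y \<and> X \<noteq> Y \<and> lift_pair R' Y t)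
      \<longleftrightarrow> (\<exists>Y. (Y, False) \<in> Es \<and> lift_pair R X Y \<and> X \<noteq> Y \<and> lift_pair R Y t)" for X
  proof
    assume "\<exists>Y. (Y, False) \<in> Es' \<and> lift_pair R' X Y \<and> X \<noteq> Y \<and> lift_pair R' Y t"
    then obtain Y where "(Y, False) \<in> Es'" "lift_pair R X Y" "X \<noteq> Y" "lift_pair R Y t"
      unfolding lift by blast
    with \<open>Es' \<subseteq> Es\<close> show "\<exists>Y. (Y, False) \<in> Es \<and> lift_pair R X Y \<and> X \<noteq> Y \<and> lift_pair R Y t"
      by blast
  next
    assume "\<exists>Y. (Y, False) \<in> Es \<and> lift_pair R X Y \<and> X \<noteq> Y \<and> lift_pair R Y t"
    then obtain Y where Y: "(Y, False) \<in> Es" "lift_pair R X Y" "X \<noteq> Y" "lift_pair R Y t"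
      by blast
    then have "Y \<subseteq> N" using below \<open>t \<subseteq> N\<close> by blast
    with Y Es' show "\<exists>Y. (Y, False) \<in> Es' \<and> lift_pair R' X Y \<and> X \<noteq> Y \<and> lift_pair R' Y t"
      unfolding lift using \<open>t \<subseteq> N\<close> by blast
  qed
  have head: "(X, True) \<in> Es' \<and> lift_pair R' X t \<longleftrightarrow> (X, True) \<in> Es \<and> lift_pair R X t" for X
    using lift[of X t] below[of X t] Es'[of X True] \<open>Es' \<subseteq> Es\<close> \<open>t \<subseteq> N\<close> by blast
  show ?thesis
    unfolding sign_adj_def dominated by (simp only: conj_assoc[symmetric] head)
qed

type_synonym 'a label = "('a \<times> ('a \<times> bool) list) list"

definition label_edges :: "'a label \<Rightarrow> ('a set \<times> bool) set" where
  "label_edges L = {({a, b}, s) | a os b s. (a, os) \<in> set L \<and> (b, s) \<in> set os}"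

definition label_rel :: "'a label \<Rightarrow> 'a label \<Rightarrow> 'a \<Rightarrow> 'a \<Rightarrow> bool" where
  "label_rel Lu Lv x y \<longleftrightarrow> earlier_in (map fst Lu) x y \<or> earlier_in (map fst Lv) x y"

definition decode :: "'a label \<Rightarrow> 'a label \<Rightarrow> bool" where
  "decode Lu Lv = sign_adj (label_rel Lu Lv) (label_edges Lu \<union> label_edges Lv)
     {last (map fst Lu), last (map fst Lv)}"

locale oriented_signed_tree_model =
  fixes T :: "node set" and A B :: "node set set" and I :: "node \<Rightarrow> 'i"
    and outs :: "node \<Rightarrow> node list"
  assumes model: "signed_tree_model T A B"
    and inj_I: "inj_on I T"
    and outs_edge: "\<And>a b. a \<in> T \<Longrightarrow> b \<in> set (outs a) \<Longrightarrow> {a, b} \<in> A \<union> B"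
    and outs_cover: "\<And>a b. a \<in> T \<Longrightarrow> b \<in> T \<Longrightarrow> {a, b} \<in> A \<union> B \<Longrightarrow> b \<in> set (outs a) \<or> a \<in> set (outs b)"
begin

definition leaf_label :: "node \<Rightarrow> 'i label" where
  "leaf_label u = map (\<lambda>a. (I a, map (\<lambda>b. (I b, {a, b} \<in> B)) (outs a))) (prefixes u)"

definition oriented_pairs :: "node set \<Rightarrow> (node set \<times> bool) set" where
  "oriented_pairs N = {({a, b}, {a, b} \<in> B) | a b. a \<in> N \<and> b \<in> set (outs a)}"

lemma pair_in_tree:
  assumes "p \<in> A \<union> B"
  obtains a b where "p = {a, b}" "a \<in> T" "b \<in> T"
  using assms model unfolding signed_tree_model_def transversal_pair_def by blast

lemma outs_in_tree: "a \<in> T \<Longrightarrow> b \<in> set (outs a) \<Longrightarrow> b \<in> T"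
  by (metis doubleton_eq_iff outs_edge pair_in_tree)

lemma prefix_in_tree: "u \<in> T \<Longrightarrow> prefix a u \<Longrightarrow> a \<in> T"
  using model full_binary_tree_prefix_closed unfolding signed_tree_model_def by blast

lemma last_leaf_label: "last (map fst (leaf_label u)) = I u"
  by (simp add: leaf_label_def last_map)

lemma label_rel_leaf_label:
  assumes "u \<in> T" "v \<in> T" "x \<in> T" "y \<in> T"
  shows "label_rel (leaf_label u) (leaf_label v) (I x) (I y) \<longleftrightarrow> prefix x y \<and> (prefix y u \<or> prefix y v)"
proof -
  have "earlier_in (map fst (leaf_label w)) (I x) (I y) \<longleftrightarrow> prefix x y \<and> prefix y w" if "w \<in> T" for w
  proof -
    have "set (prefixes w) \<union> {x, y} \<subseteq> T"
      using that assms prefix_in_tree by auto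
    then have "earlier_in (map I (prefixes w)) (I x) (I y) \<longleftrightarrow> earlier_in (prefixes w) x y"
      by (intro earlier_in_map inj_on_subset[OF inj_I])
    then show ?thesis
      by (simp add: leaf_label_def comp_def earlier_in_prefixes)
  qed
  with assms show ?thesis
    unfolding label_rel_def by blast
qed

lemma label_edges_leaf_label:
  "label_edges (leaf_label u) = rename_pairs I (oriented_pairs {a. prefix a u})"
  unfolding label_edges_def leaf_label_def rename_pairs_def oriented_pairs_def by force

lemma oriented_pairs_Un: "oriented_pairs M \<union> oriented_pairs N = oriented_pairs (M \<union> N)"
  unfolding oriented_pairs_def by blast

lemma oriented_pairs_subset:
  assumes "N \<subseteq> T"
  shows "oriented_pairs N \<subseteq> signed_pairs A B"
  using assms outs_edge unfolding oriented_pairs_def signed_pairs_def by blast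

lemma signed_pairs_oriented:
  assumes "N \<subseteq> T" and "(p, s) \<in> signed_pairs A B" and "p \<subseteq> N"
  shows "(p, s) \<in> oriented_pairs N"
proof -
  from assms(2) have p: "p \<in> A \<union> B" "s = (p \<in> B)"
    unfolding signed_pairs_def by auto
  obtain a b where ab: "p = {a, b}" "a \<in> T" "b \<in> T"
    using pair_in_tree[OF p(1)] by blast
  with p outs_cover have "b \<in> set (outs a) \<or> a \<in> set (outs b)"
    by blast
  then obtain x y where xy: "p = {x, y}" "y \<in> set (outs x)"
    using ab(1) insert_commute by metis
  then have "x \<in> N"
    using assms(3) by blast
  with xy p(2) show ?thesis
    unfolding oriented_pairs_def by (intro CollectI exI[of _ x] exI[of _ y]) simp
qed

theorem decode_leaf_label:
  assumes u: "u \<in> T" and v: "v \<in> T"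
  shows "decode (leaf_label u) (leaf_label v) \<longleftrightarrow> model_adj A B u v"
proof -
  define N where "N = {a. prefix a u \<or> prefix a v}"
  have N: "N \<subseteq> T"
    using u v prefix_in_tree unfolding N_def by blast
  have uv: "{u, v} \<subseteq> N"
    unfolding N_def by simp
  have "decode (leaf_label u) (leaf_label v)
      \<longleftrightarrow> sign_adj (label_rel (leaf_label u) (leaf_label v)) (rename_pairs I (oriented_pairs N)) (I ` {u, v})"
    unfolding decode_def label_edges_leaf_label last_leaf_label rename_pairs_Un oriented_pairs_Un
    by (simp add: N_def Collect_disj_eq)
  also have "\<dots> \<longleftrightarrow> sign_adj (\<lambda>x y. prefix x y \<and> y \<in> N) (oriented_pairs N) {u, v}"
  proof (rule sign_adj_rename_pairs[OF inj_I])
    show "X \<subseteq> T" if "(X, s) \<in> oriented_pairs N" for X s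
      using that N outs_in_tree unfolding oriented_pairs_def by blast
    show "{u, v} \<subseteq> T" using u v by simp
    show "label_rel (leaf_label u) (leaf_label v) (I x) (I y) \<longleftrightarrow> prefix x y \<and> y \<in> N"
      if "x \<in> T" "y \<in> T" for x y
      using label_rel_leaf_label[OF u v that] unfolding N_def by simp
  qed
  also have "\<dots> \<longleftrightarrow> sign_adj prefix (signed_pairs A B) {u, v}"
  proof (rule sign_adj_restrict)
    show "x \<in> N" if "prefix x y" "y \<in> N" for x y
      using that prefix_order.trans unfolding N_def by blast
    show "{u, v} \<subseteq> N" by (rule uv)
    show "oriented_pairs N \<subseteq> signed_pairs A B" by (rule oriented_pairs_subset[OF N])
    show "(X, s) \<in> oriented_pairs N" if "(X, s) \<in> signed_pairs A B" "X \<subseteq> N" for X s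
      using signed_pairs_oriented[OF N that] .
  qed simp
  also have "\<dots> \<longleftrightarrow> model_adj A B u v"
    using model model_adj_eq_sign_adj unfolding signed_tree_model_def by blast
  finally show ?thesis .
qed

end

definition enc_id :: "nat \<times> nat \<Rightarrow> bool list" where
  "enc_id = enc_pair enc_nat enc_nat"

definition enc_label :: "(nat \<times> nat) label \<Rightarrow> bool list" where
  "enc_label = enc_list (enc_pair enc_id (enc_list (enc_pair enc_id (\<lambda>b. [b]))))"

lemma inj_enc_label: "inj enc_label"
  unfolding enc_label_def enc_id_def
  by (intro self_delimiting_imp_inj self_delimiting_enc_list self_delimiting_enc_pair
      self_delimiting_enc_nat self_delimiting_bool)

lemma length_enc_id_le:
  assumes "x \<in> {..<2 ^ k} \<times> {..<2 ^ k}"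
  shows "length (enc_id x) \<le> 4 * k + 2"
  using assms length_enc_nat_le[of "fst x" k] length_enc_nat_le[of "snd x" k]
  by (auto simp: enc_id_def enc_pair_def split_beta)

lemma length_enc_label_le:
  assumes "\<forall>(x, es) \<in> set L. x \<in> {..<2 ^ k} \<times> {..<2 ^ k} \<and> length es \<le> d
             \<and> (\<forall>(y, s) \<in> set es. y \<in> {..<2 ^ k} \<times> {..<2 ^ k})"
  shows "length (enc_label L) \<le> 1 + length L * ((d + 1) * (4 * k + 4))"
proof -
  let ?enc_edge = "enc_pair enc_id (\<lambda>b. [b])"
  let ?enc_entry = "enc_pair enc_id (enc_list ?enc_edge)"
  have "length (?enc_entry (x, es)) \<le> (d + 1) * (4 * k + 4) - 1" if "(x, es) \<in> set L" for x es
  proof -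
    have "\<forall>e\<in>set es. length (?enc_edge e) \<le> 4 * k + 3"
      using assms that length_enc_id_le by (fastforce simp: enc_pair_def)
    then have "length (enc_list ?enc_edge es) \<le> 1 + length es * (4 * k + 4)"
      using length_enc_list_le[of es ?enc_edge "4 * k + 3"] by (simp add: add.commute)
    also have "\<dots> \<le> 1 + d * (4 * k + 4)"
      using assms that by auto
    finally show ?thesis
      using assms that length_enc_id_le[of x k] by (auto simp: length_enc_pair algebra_simps)
  qed
  then have "length (enc_label L) \<le> 1 + length L * ((d + 1) * (4 * k + 4) - 1 + 1)"
    unfolding enc_label_def by (intro length_enc_list_le) auto
  then show ?thesis
    by (simp add: algebra_simps)
qed

lemma signed_tree_model_orientation:
  assumes model: "signed_tree_model T A B" and width: "width_at_most T A B d"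
  obtains outs where "\<And>a. a \<in> T \<Longrightarrow> length (outs a) \<le> d"
    and "\<And>a b. a \<in> T \<Longrightarrow> b \<in> set (outs a) \<Longrightarrow> {a, b} \<in> A \<union> B"
    and "\<And>a b. a \<in> T \<Longrightarrow> b \<in> T \<Longrightarrow> {a, b} \<in> A \<union> B \<Longrightarrow> b \<in> set (outs a) \<or> a \<in> set (outs b)"
proof -
  have "finite T"
    using model unfolding signed_tree_model_def full_binary_tree_def by blast
  then obtain out where out: "\<forall>a\<in>T. out a \<subseteq> T \<and> card (out a) \<le> d \<and> (\<forall>b\<in>out a. {a, b} \<in> A \<union> B)
      \<and> (\<forall>b\<in>T. {a, b} \<in> A \<union> B \<longrightarrow> b \<in> out a \<or> a \<in> out b)"
    using degenerate_orientation[OF _, of T "A \<union> B" d] width unfolding width_at_most_def by blast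
  define outs where "outs a = (SOME xs. set xs = out a \<and> distinct xs)" for a
  have outs: "set (outs a) = out a \<and> distinct (outs a)" if "a \<in> T" for a
  proof -
    have "finite (out a)"
      using out that \<open>finite T\<close> finite_subset by blast
    then show ?thesis
      unfolding outs_def using someI_ex[OF finite_distinct_list] by blast
  qed
  show thesis
  proof
    show "length (outs a) \<le> d" if "a \<in> T" for a
      using out outs[OF that] that distinct_card[of "outs a"] by metis
    show "{a, b} \<in> A \<union> B" if "a \<in> T" "b \<in> set (outs a)" for a b
      using out outs that by blast
    show "b \<in> set (outs a) \<or> a \<in> set (outs b)" if "a \<in> T" "b \<in> T" "{a, b} \<in> A \<union> B" for a b
      using out outs that by blast
  qed
qed

lemma full_binary_tree_node_ids:
  assumes full: "full_binary_tree T" and depth: "depth_at_most T h" and leaves: "card (leaves T) \<le> n"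
  obtains I :: "node \<Rightarrow> nat \<times> nat" where "inj_on I T"
    and "\<And>w. w \<in> T \<Longrightarrow> I w \<in> {..<n} \<times> {..<n}"
proof -
  have "finite (leaves T)"
    using full unfolding full_binary_tree_def leaves_def by simp
  then obtain \<iota> where \<iota>: "bij_betw \<iota> (leaves T) {0..<card (leaves T)}"
    using ex_bij_betw_finite_nat by blast
  have leaf: "extreme_leaf T b w \<in> leaves T" if "w \<in> T" for b w
    using extreme_leaf_in_leaves[OF full depth that] .
  define I where "I w = (\<iota> (extreme_leaf T False w), \<iota> (extreme_leaf T True w))" for w
  show thesis
  proof
    show "inj_on I T"
    proof (rule inj_onI)
      fix x y assume "x \<in> T" "y \<in> T" "I x = I y"
      with leaf bij_betw_imp_inj_on[OF \<iota>]
      have "(extreme_leaf T False x, extreme_leaf T True x) = (extreme_leaf T False y, extreme_leaf T True y)"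
        unfolding I_def by (simp add: inj_on_eq_iff)
      then show "x = y"
        by (rule injD[OF inj_extreme_leaves])
    qed
    show "I w \<in> {..<n} \<times> {..<n}" if "w \<in> T" for w
      using bij_betw_apply[OF \<iota> leaf[OF that]] leaves unfolding I_def by (auto intro: order.strict_trans2)
  qed
qed

lemma signed_tree_model_labels:
  assumes model: "signed_tree_model T A B" and width: "width_at_most T A B d"
    and depth: "depth_at_most T h" and leaves: "card (leaves T) \<le> 2 ^ k"
  obtains lab :: "node \<Rightarrow> (nat \<times> nat) label"
  where "\<And>u. u \<in> T \<Longrightarrow> length (enc_label (lab u)) \<le> 1 + h * ((d + 1) * (4 * k + 4))"
    and "\<And>u v. u \<in> T \<Longrightarrow> v \<in> T \<Longrightarrow> decode (lab u) (lab v) \<longleftrightarrow> model_adj A B u v"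
proof -
  have full: "full_binary_tree T"
    using model unfolding signed_tree_model_def by blast
  obtain outs where outs_length: "\<And>a. a \<in> T \<Longrightarrow> length (outs a) \<le> d"
    and outs_edge: "\<And>a b. a \<in> T \<Longrightarrow> b \<in> set (outs a) \<Longrightarrow> {a, b} \<in> A \<union> B"
    and outs_cover: "\<And>a b. a \<in> T \<Longrightarrow> b \<in> T \<Longrightarrow> {a, b} \<in> A \<union> B \<Longrightarrow> b \<in> set (outs a) \<or> a \<in> set (outs b)"
    using signed_tree_model_orientation[OF model width] by blast
  obtain I :: "node \<Rightarrow> nat \<times> nat" where inj_I: "inj_on I T"
    and I: "\<And>w. w \<in> T \<Longrightarrow> I w \<in> {..<2 ^ k} \<times> {..<2 ^ k}"
    using full_binary_tree_node_ids[OF full depth leaves] by blast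
  interpret oriented_signed_tree_model T A B I outs
    by unfold_locales (fact model inj_I outs_edge outs_cover)+
  show thesis
  proof
    fix u assume u: "u \<in> T"
    have "I a \<in> {..<2 ^ k} \<times> {..<2 ^ k} \<and> length (outs a) \<le> d
        \<and> (\<forall>b \<in> set (outs a). I b \<in> {..<2 ^ k} \<times> {..<2 ^ k})" if "prefix a u" for a
      using prefix_in_tree[OF u that] I outs_length outs_in_tree by blast
    then have "length (enc_label (leaf_label u)) \<le> 1 + length (leaf_label u) * ((d + 1) * (4 * k + 4))"
      by (intro length_enc_label_le) (auto simp: leaf_label_def)
    also have "\<dots> \<le> 1 + h * ((d + 1) * (4 * k + 4))"
      using depth u unfolding depth_at_most_def leaf_label_def
      by (intro add_left_mono mult_right_mono) auto
    finally show "length (enc_label (leaf_label u)) \<le> 1 + h * ((d + 1) * (4 * k + 4))" .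
  qed (rule decode_leaf_label)
qed

lemma exists_pow2_cover:
  assumes "1 \<le> n"
  obtains k where "n \<le> 2 ^ k" and "real k < log 2 (real n) + 1"
proof -
  define k where "k = nat \<lceil>log 2 (real n)\<rceil>"
  have k: "real k = of_int \<lceil>log 2 (real n)\<rceil>"
    using assms by (simp add: k_def)
  then have "log 2 (real n) \<le> real k"
    by simp
  then have "real n \<le> 2 ^ k"
    using assms by (simp add: log_le_iff powr_realpow)
  then have "n \<le> 2 ^ k"
    by (metis of_nat_le_iff of_nat_numeral of_nat_power)
  moreover have "real k < log 2 (real n) + 1"
    using k ceiling_correct[of "log 2 (real n)"] by linarith
  ultimately show thesis
    using that by blast
qed

lemma label_length_bound:
  fixes L :: real
  assumes "1 \<le> d" "1 \<le> h" "1 \<le> L" "real k < L + 1"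
  shows "real (1 + h * ((d + 1) * (4 * k + 4))) \<le> 25 * real d * real h * L"
proof -
  have "(real d + 1) * (4 * real k + 4) \<le> (2 * real d) * (12 * L)"
    using assms by (intro mult_mono) auto
  then have "real h * ((real d + 1) * (4 * real k + 4)) \<le> real h * ((2 * real d) * (12 * L))"
    by (rule mult_left_mono) simp
  then have "real h * ((real d + 1) * (4 * real k + 4)) \<le> 24 * real d * real h * L"
    by (simp add: algebra_simps)
  moreover have "1 \<le> real d * real h * L"
    using assms by (simp add: mult_ge1_I)
  moreover have "real (1 + h * ((d + 1) * (4 * k + 4))) = 1 + real h * ((real d + 1) * (4 * real k + 4))"
    by (simp add: algebra_simps)
  ultimately show ?thesis
    by linarith
qed

definition label_decoder :: "bool list \<Rightarrow> bool list \<Rightarrow> bool" where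
  "label_decoder x y = decode (inv enc_label x) (inv enc_label y)"

lemma label_decoder_enc_label: "label_decoder (enc_label L) (enc_label L') \<longleftrightarrow> decode L L'"
  by (simp add: label_decoder_def inj_enc_label inv_f_f)

lemma has_signed_tree_model_labels:
  assumes d: "1 \<le> d" and h: "1 \<le> h" and n: "2 \<le> card V"
    and "has_signed_tree_model d h V E"
  shows "\<exists>lab. (\<forall>v\<in>V. real (length (lab v)) \<le> 25 * real d * real h * log 2 (real (card V)))
    \<and> (\<forall>u\<in>V. \<forall>v\<in>V. u \<noteq> v \<longrightarrow> (label_decoder (lab u) (lab v) \<longleftrightarrow> E u v))"
proof -
  obtain T A B \<phi> where model: "signed_tree_model T A B" and width: "width_at_most T A B d"
    and depth: "depth_at_most T h" and \<phi>: "bij_betw \<phi> V (leaves T)"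
    and adj: "\<forall>u\<in>V. \<forall>v\<in>V. u \<noteq> v \<longrightarrow> (E u v \<longleftrightarrow> model_adj A B (\<phi> u) (\<phi> v))"
    using assms(4) unfolding has_signed_tree_model_def by blast
  obtain k where k: "card V \<le> 2 ^ k" "real k < log 2 (real (card V)) + 1"
    using exists_pow2_cover n by (metis one_le_numeral order_trans)
  have "card (leaves T) \<le> 2 ^ k"
    using k(1) bij_betw_same_card[OF \<phi>] by simp
  then obtain lab where len: "\<And>u. u \<in> T \<Longrightarrow> length (enc_label (lab u)) \<le> 1 + h * ((d + 1) * (4 * k + 4))"
    and dec: "\<And>u v. u \<in> T \<Longrightarrow> v \<in> T \<Longrightarrow> decode (lab u) (lab v) \<longleftrightarrow> model_adj A B u v"
    using signed_tree_model_labels[OF model width depth] by blast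
  have leaf: "\<phi> v \<in> T" if "v \<in> V" for v
    using bij_betw_apply[OF \<phi> that] unfolding leaves_def by blast
  have log_n: "1 \<le> log 2 (real (card V))"
    using n by simp
  have "real (length (enc_label (lab (\<phi> v)))) \<le> 25 * real d * real h * log 2 (real (card V))"
    if "v \<in> V" for v
    using len[OF leaf[OF that]]
    by (intro order.trans[OF _ label_length_bound[OF d h log_n k(2)]]) (simp only: of_nat_le_iff)
  moreover have "label_decoder (enc_label (lab (\<phi> u))) (enc_label (lab (\<phi> v))) \<longleftrightarrow> E u v"
    if "u \<in> V" "v \<in> V" "u \<noteq> v" for u v
    using that dec[OF leaf leaf] adj by (simp add: label_decoder_enc_label)
  ultimately show ?thesis
    by (intro exI[of _ "\<lambda>v. enc_label (lab (\<phi> v))"]) blast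
qed

theorem proposition4p1:
  "\<exists>C::real. C > 0 \<and> (\<forall>d h :: nat. d \<ge> 1 \<longrightarrow> h \<ge> 1 \<longrightarrow>
     labeling_scheme (has_signed_tree_model d h)
       (\<lambda>n. C * real d * real h * log 2 (real n)))"
proof (intro exI[of _ 25] conjI allI impI)
  fix d h :: nat assume "1 \<le> d" "1 \<le> h"
  then show "labeling_scheme (has_signed_tree_model d h) (\<lambda>n. 25 * real d * real h * log 2 (real n))"
    unfolding labeling_scheme_def
    by (intro exI[of _ label_decoder] allI impI has_signed_tree_model_labels)
qed simp

end
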